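(* Let $H$ be a graph with vertex set $A\cup\{v\}$, where $v\notin A$, $A$ is a clique, and $v$ has both a neighbour and a non-neighbour in $A$. Let $F$ be a spanning subgraph of $H$ obtained by removing some (possibly all) edges incident to $v$. Then $H\xrightarrow{\cap} F$.
   Context: All graphs are finite and simple. For graphs $G_1=(V_1,E_1)$, $G_2=(V_2,E_2)$, $G_1\cap G_2=(V_1\cap V_2, E_1\cap E_2)$. For a graph $G=(V,E)$ and an injective map $\alpha$ on $V$, $G^{\alpha}$ has vertex set $\alpha(V)$ and edge set $\{\{\alpha(v),\alpha(w)\}: \{v,w\}\in E\}$. We write $G\xrightarrow{\cap} H$ if $H=G^{\alpha_1}\cap\cdots\cap G^{\alpha_k}$ for some $k\ge1$ and injective maps $\alpha_1,\dots,\alpha_k$ on $V(G)$. *)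

theory Defs
  imports Main
begin

type_synonym 'a graph = "'a set \<times> 'a set set"

definition simple_graph :: "'a graph \<Rightarrow> bool" where
  "simple_graph G \<longleftrightarrow> finite (fst G) \<and>
     (\<forall>e\<in>snd G. e \<subseteq> fst G \<and> card e = 2)"

definition graph_map :: "('a \<Rightarrow> 'a) \<Rightarrow> 'a graph \<Rightarrow> 'a graph" where
  "graph_map \<alpha> G = (\<alpha> ` fst G, (\<lambda>e. \<alpha> ` e) ` snd G)"

definition cap_arrow :: "'a graph \<Rightarrow> 'a graph \<Rightarrow> bool" where
  "cap_arrow G H \<longleftrightarrow> (\<exists>k::nat. k \<ge> 1 \<and> (\<exists>\<alpha>s :: nat \<Rightarrow> 'a \<Rightarrow> 'a.
     (\<forall>i<k. inj_on (\<alpha>s i) (fst G)) \<and>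
     H = ((\<Inter>i<k. fst (graph_map (\<alpha>s i) G)), (\<Inter>i<k. snd (graph_map (\<alpha>s i) G)))))"

end

theory Submission
  imports Defs "HOL-Combinatorics.Transposition"
begin

(* Fix a non-neighbour b of v in A. For s \<in> A the transposition (s b) fixes v and maps the
   clique A onto itself, so H^(s b) contains all clique edges and every edge vw with w \<noteq> s, b,
   but contains vb in place of vs. Since vb is not an edge of H, the intersection of H with
   H^(s b) is H minus the single edge vs. Intersecting H with these images for all edges vs
   deleted in F gives F. *)

lemma simple_graph_edgeE:
  assumes "simple_graph G" "e \<in> snd G"
  obtains p q where "e = {p, q}" "p \<noteq> q" "p \<in> fst G" "q \<in> fst G"
proof -
  have "card e = 2" "e \<subseteq> fst G"
    using assms unfolding simple_graph_def by auto
  then show thesis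
    using that by (auto simp: card_2_iff)
qed

lemma simple_graph_incident_edgeE:
  assumes "simple_graph G" "e \<in> snd G" "v \<in> e"
  obtains w where "e = {v, w}" "w \<noteq> v" "w \<in> fst G"
proof -
  obtain p q where pq: "e = {p, q}" "p \<noteq> q" "p \<in> fst G" "q \<in> fst G"
    using assms(1,2) by (rule simple_graph_edgeE)
  show thesis
  proof (cases "p = v")
    case True
    with pq that show thesis by blast
  next
    case False
    with pq assms(3) have "e = {v, p}" "q = v" by auto
    with pq that show thesis by blast
  qed
qed

lemma simple_graph_edge_endpoint:
  assumes "simple_graph G" "{v, w} \<in> snd G"
  shows "w \<in> fst G" "w \<noteq> v"
proof -
  obtain w' where "{v, w} = {v, w'}" "w' \<noteq> v" "w' \<in> fst G"
    using simple_graph_incident_edgeE[OF assms] by blast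
  then show "w \<in> fst G" "w \<noteq> v"
    by (auto simp: doubleton_eq_iff)
qed

lemma simple_graph_delete_incident_edges:
  assumes "simple_graph H" "snd F \<subseteq> snd H" "\<forall>e\<in>snd H - snd F. v \<in> e"
  shows "snd F = {e \<in> snd H. \<forall>w. {v, w} \<in> snd H - snd F \<longrightarrow> e \<noteq> {v, w}}"
proof (intro set_eqI iffI)
  fix e
  assume "e \<in> {e \<in> snd H. \<forall>w. {v, w} \<in> snd H - snd F \<longrightarrow> e \<noteq> {v, w}}"
  then have e: "e \<in> snd H" "\<forall>w. {v, w} \<in> snd H - snd F \<longrightarrow> e \<noteq> {v, w}"
    by auto
  show "e \<in> snd F"
  proof (rule ccontr)
    assume "e \<notin> snd F"
    with e(1) assms(3) have "v \<in> e"
      by blast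
    with assms(1) e(1) obtain w where "e = {v, w}"
      by (rule simple_graph_incident_edgeE)
    with e \<open>e \<notin> snd F\<close> show False
      by blast
  qed
qed (use assms(2) in auto)

lemma graph_map_involution:
  assumes "\<And>x. \<sigma> (\<sigma> x) = x" "\<sigma> ` fst G = fst G"
  shows "graph_map \<sigma> G = (fst G, {e. \<sigma> ` e \<in> snd G})"
proof -
  have inv: "\<sigma> ` \<sigma> ` e = e" for e
    by (simp add: image_image assms(1))
  have "e \<in> (\<lambda>e. \<sigma> ` e) ` snd G \<longleftrightarrow> \<sigma> ` e \<in> snd G" for e
  proof
    assume "e \<in> (\<lambda>e. \<sigma> ` e) ` snd G"
    then show "\<sigma> ` e \<in> snd G"
      using inv by auto
  next
    assume "\<sigma> ` e \<in> snd G"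
    then show "e \<in> (\<lambda>e. \<sigma> ` e) ` snd G"
      by (rule rev_image_eqI) (simp add: inv)
  qed
  then show ?thesis
    unfolding graph_map_def using assms(2) by auto
qed

lemma cap_arrow_INT:
  assumes "finite I" "I \<noteq> {}" "\<forall>\<sigma>\<in>I. inj_on \<sigma> (fst G)"
  shows "cap_arrow G ((\<Inter>\<sigma>\<in>I. fst (graph_map \<sigma> G)), (\<Inter>\<sigma>\<in>I. snd (graph_map \<sigma> G)))"
proof -
  obtain n :: nat and f where "bij_betw f {..<n} I"
    using ex_bij_betw_nat_finite[OF \<open>finite I\<close>] by (auto simp: atLeast0LessThan)
  then have I: "I = f ` {..<n}"
    by (simp add: bij_betw_imp_surj_on)
  then have "n \<ge> 1"
    using \<open>I \<noteq> {}\<close> by (cases n) auto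
  moreover have "\<forall>i<n. inj_on (f i) (fst G)"
    using assms(3) I by auto
  ultimately show ?thesis
    unfolding cap_arrow_def I by (auto simp: image_image)
qed

lemma cap_arrow_INT_involutions:
  assumes "finite I" "I \<noteq> {}"
    and "\<forall>\<sigma>\<in>I. \<forall>x. \<sigma> (\<sigma> x) = x" "\<forall>\<sigma>\<in>I. \<sigma> ` fst G = fst G"
  shows "cap_arrow G (fst G, \<Inter>\<sigma>\<in>I. {e. \<sigma> ` e \<in> snd G})"
proof -
  have "\<forall>\<sigma>\<in>I. inj_on \<sigma> (fst G)"
    using assms(3) by (metis inj_on_inverseI)
  moreover have "graph_map \<sigma> G = (fst G, {e. \<sigma> ` e \<in> snd G})" if "\<sigma> \<in> I" for \<sigma>
    using assms(3,4) that by (simp add: graph_map_involution)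
  then have "(\<Inter>\<sigma>\<in>I. fst (graph_map \<sigma> G)) = fst G"
    and "(\<Inter>\<sigma>\<in>I. snd (graph_map \<sigma> G)) = (\<Inter>\<sigma>\<in>I. {e. \<sigma> ` e \<in> snd G})"
    using assms(2) by simp_all
  ultimately show ?thesis
    using cap_arrow_INT[OF assms(1,2), of G] by simp
qed

lemma transpose_clique_edge_iff:
  assumes "simple_graph H" "fst H = insert v A" "v \<notin> A"
    and clique: "\<forall>x\<in>A. \<forall>y\<in>A. x \<noteq> y \<longrightarrow> {x, y} \<in> snd H"
    and "s \<in> A" "b \<in> A" "{v, b} \<notin> snd H"
    and e: "e \<in> snd H"
  shows "transpose s b ` e \<in> snd H \<longleftrightarrow> e \<noteq> {v, s}"
proof (cases "v \<in> e")
  case True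
  from simple_graph_incident_edgeE[OF assms(1) e True] obtain w
    where w: "e = {v, w}" "w \<noteq> v"
    by blast
  have "v \<noteq> s" "v \<noteq> b" "w \<noteq> b"
    using assms(3,5,6,7) e w(1) by auto
  then have img: "transpose s b ` e = {v, transpose s b w}"
    using w(1) by simp
  show ?thesis
  proof (cases "w = s")
    case True
    then show ?thesis
      using img w(1) assms(7) by simp
  next
    case False
    then have "transpose s b ` e = e"
      using img w(1) \<open>w \<noteq> b\<close> by simp
    moreover have "e \<noteq> {v, s}"
      using False w by (auto simp: doubleton_eq_iff)
    ultimately show ?thesis
      using e by simp
  qed
next
  case False
  from simple_graph_edgeE[OF assms(1) e] obtain p q
    where "e = {p, q}" "p \<noteq> q" "p \<in> A" "q \<in> A"
    using False unfolding assms(2) by blast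
  then have "transpose s b ` e = {transpose s b p, transpose s b q}"
    by simp
  also have "\<dots> \<in> snd H"
  proof -
    have "transpose s b p \<in> A" "transpose s b q \<in> A"
      using \<open>p \<in> A\<close> \<open>q \<in> A\<close> assms(5,6) by (auto simp: transpose_def)
    moreover have "transpose s b p \<noteq> transpose s b q"
      using \<open>p \<noteq> q\<close> by (metis transpose_involutory)
    ultimately show ?thesis
      using clique by blast
  qed
  finally have "transpose s b ` e \<in> snd H" .
  with False show ?thesis
    by blast
qed

theorem mainTheorem10:
  fixes A :: "'a set" and v :: 'a and H F :: "'a graph"
  assumes "simple_graph H"
    and "fst H = insert v A"
    and "v \<notin> A"
    and "\<forall>x\<in>A. \<forall>y\<in>A. x \<noteq> y \<longrightarrow> {x, y} \<in> snd H"
    and "\<exists>a\<in>A. {v, a} \<in> snd H"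
    and "\<exists>b\<in>A. {v, b} \<notin> snd H"
    and "fst F = fst H"
    and "snd F \<subseteq> snd H"
    and "\<forall>e\<in>snd H - snd F. v \<in> e"
  shows "cap_arrow H F"
proof -
  obtain b where b: "b \<in> A" "{v, b} \<notin> snd H"
    using assms(6) by blast
  define S where "S = {w. {v, w} \<in> snd H - snd F}"
  define I where "I = insert id ((\<lambda>s. transpose s b) ` S)"
  have "S \<subseteq> A"
    using simple_graph_edge_endpoint[OF assms(1)] assms(2) by (auto simp: S_def)
  moreover have "finite A"
    using assms(1,2) unfolding simple_graph_def by simp
  ultimately have "finite I"
    unfolding I_def using finite_subset by blast
  have "transpose s b ` fst H = fst H" if "s \<in> S" for s
    using that \<open>S \<subseteq> A\<close> b(1) assms(2) by (intro transpose_image_eq) auto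
  with \<open>finite I\<close> have "cap_arrow H (fst H, \<Inter>\<sigma>\<in>I. {e. \<sigma> ` e \<in> snd H})"
    by (intro cap_arrow_INT_involutions) (auto simp: I_def)
  moreover have "(\<Inter>\<sigma>\<in>I. {e. \<sigma> ` e \<in> snd H}) = {e \<in> snd H. \<forall>s\<in>S. transpose s b ` e \<in> snd H}"
    unfolding I_def by auto
  also have "\<dots> = {e \<in> snd H. \<forall>s\<in>S. e \<noteq> {v, s}}"
    using transpose_clique_edge_iff[OF assms(1-4) _ b] \<open>S \<subseteq> A\<close> by blast
  also have "\<dots> = snd F"
    using simple_graph_delete_incident_edges[OF assms(1,8,9)] unfolding S_def by auto
  ultimately show ?thesis
    using assms(7) by (metis prod.collapse)
qed

end
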